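(* Let $\Omega$ be the Koenigs domain of a non-elliptic semigroup in $\mathbb D$. Then: (1) $\Lambda_p(\Omega)$ is a convex subset of $\mathbb C$ containing $0$, for all $p\in[1,+\infty]$; (2) if $p,q\in[1,+\infty)$, then $\Lambda_q(\Omega)=\frac pq\Lambda_p(\Omega)$; (3) if $1\le p\le q\le+\infty$, then $\Lambda_q(\Omega)\subseteq\Lambda_p(\Omega)$ and hence $\mathcal E_q(\Omega)\subseteq\mathcal E_p(\Omega)$; in particular $\Lambda_\infty(\Omega)\subseteq\bigcap_{1\le p<\infty}\Lambda_p(\Omega)$ and $\mathcal E_\infty(\Omega)\subseteq\bigcap_{1\le p<\infty}\mathcal E_p(\Omega)$; (4) for $\lambda\in\mathbb C\setminus\{0\}$, $e^{\lambda z}\in H^\infty(\Omega)$ if and only if $\Omega\subseteq\{z\in\mathbb C:\operatorname{Re}(\lambda z)<M\}$ for some $M\in\mathbb R$; in particular, if $\lambda\in\Lambda_\infty(\Omega)$ then $t\lambda\in\Lambda_\infty(\Omega)$ for all $t\ge0$; (5) if $D$ is the Koenigs domain of another non-elliptic semigroup and $\Omega\subset D$, then $\Lambda_p(D)\subseteq\Lambda_p(\Omega)$ and $\mathcal E_p(D)\subseteq\mathcal E_p(\Omega)$ for all $p\in[1,+\infty]$.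
   Context: A semigroup in $\mathbb D$ is a family $(\varphi_t)_{t\ge0}$ of holomorphic self-maps of the unit disc with $\varphi_0=\mathrm{id}$, $\varphi_t\circ\varphi_s=\varphi_{t+s}$, continuous in $t$; non-elliptic if no $\varphi_t$, $t>0$, has an interior fixed point. Its Koenigs function is a univalent $h:\mathbb D\to\mathbb C$ with $h\circ\varphi_t=h+t$ and $\bigcup_{t\ge0}(h(\mathbb D)-t)$ equal to $\mathbb C$, a horizontal half-plane or a horizontal strip; its Koenigs domain is $\Omega=h(\mathbb D)$. For simply connected $G\subsetneq\mathbb C$ and $1\le p<\infty$, $H^p(G)$ is the space of holomorphic $f$ on $G$ such that $|f|^p$ has a harmonic majorant; $H^\infty(G)$ is the space of bounded holomorphic functions. For $p\in[1,\infty]$, $\Lambda_p(G)=\{\lambda\in\mathbb C:e^{\lambda z}\in H^p(G)\}$ and $\mathcal E_p(G)=\operatorname{span}\{e^{\lambda z}:\lambda\in\Lambda_p(G)\}$. *)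

theory Defs
  imports "HOL-Analysis.Analysis"
begin

abbreviation unit_disc :: "complex set" where "unit_disc \<equiv> ball 0 1"

definition semigroup_in_disc :: "(real \<Rightarrow> complex \<Rightarrow> complex) \<Rightarrow> bool" where
  "semigroup_in_disc \<phi> \<longleftrightarrow>
     (\<forall>t\<ge>0. \<phi> t holomorphic_on unit_disc \<and> \<phi> t ` unit_disc \<subseteq> unit_disc) \<and>
     (\<forall>z\<in>unit_disc. \<phi> 0 z = z) \<and>
     (\<forall>t\<ge>0. \<forall>s\<ge>0. \<forall>z\<in>unit_disc. \<phi> t (\<phi> s z) = \<phi> (t + s) z) \<and>
     (\<forall>z\<in>unit_disc. continuous_on {0..} (\<lambda>t. \<phi> t z))"

definition non_elliptic_semigroup :: "(real \<Rightarrow> complex \<Rightarrow> complex) \<Rightarrow> bool" where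
  "non_elliptic_semigroup \<phi> \<longleftrightarrow> semigroup_in_disc \<phi> \<and>
     (\<forall>t>0. \<forall>z\<in>unit_disc. \<phi> t z \<noteq> z)"

definition horizontal_half_plane :: "complex set \<Rightarrow> bool" where
  "horizontal_half_plane S \<longleftrightarrow> (\<exists>a::real. S = {z. Im z > a} \<or> S = {z. Im z < a})"

definition horizontal_strip :: "complex set \<Rightarrow> bool" where
  "horizontal_strip S \<longleftrightarrow> (\<exists>a b::real. a < b \<and> S = {z. a < Im z \<and> Im z < b})"

definition koenigs_function ::
  "(real \<Rightarrow> complex \<Rightarrow> complex) \<Rightarrow> (complex \<Rightarrow> complex) \<Rightarrow> bool" where
  "koenigs_function \<phi> h \<longleftrightarrow>
     h holomorphic_on unit_disc \<and> inj_on h unit_disc \<and>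
     (\<forall>t\<ge>0. \<forall>z\<in>unit_disc. h (\<phi> t z) = h z + of_real t) \<and>
     (let U = (\<Union>t\<in>{0::real..}. (\<lambda>w. w - of_real t) ` (h ` unit_disc)) in
        U = UNIV \<or> horizontal_half_plane U \<or> horizontal_strip U)"

definition koenigs_domain :: "complex set \<Rightarrow> bool" where
  "koenigs_domain \<Omega> \<longleftrightarrow>
     (\<exists>\<phi> h. non_elliptic_semigroup \<phi> \<and> koenigs_function \<phi> h \<and> \<Omega> = h ` unit_disc)"

text \<open>Here g z is the gradient of u at z (via the real inner product on complex),
  Dg z the derivative of the gradient; the Laplacian is
  u_xx + u_yy = Re (Dg z 1) + Im (Dg z i).\<close>
definition harmonic_on :: "(complex \<Rightarrow> real) \<Rightarrow> complex set \<Rightarrow> bool" where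
  "harmonic_on u G \<longleftrightarrow> open G \<and>
     (\<exists>g Dg. (\<forall>z\<in>G. (u has_derivative (\<lambda>w. g z \<bullet> w)) (at z)) \<and>
             (\<forall>z\<in>G. (g has_derivative Dg z) (at z)) \<and>
             continuous_on G (\<lambda>z. Dg z 1) \<and> continuous_on G (\<lambda>z. Dg z \<i>) \<and>
             (\<forall>z\<in>G. Re (Dg z 1) + Im (Dg z \<i>) = 0))"

definition hardy_fin :: "real \<Rightarrow> complex set \<Rightarrow> (complex \<Rightarrow> complex) \<Rightarrow> bool" where
  "hardy_fin p G f \<longleftrightarrow> f holomorphic_on G \<and>
     (\<exists>u. harmonic_on u G \<and> (\<forall>z\<in>G. norm (f z) powr p \<le> u z))"

definition hardy_inf :: "complex set \<Rightarrow> (complex \<Rightarrow> complex) \<Rightarrow> bool" where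
  "hardy_inf G f \<longleftrightarrow> f holomorphic_on G \<and> bounded (f ` G)"

definition hardy :: "ereal \<Rightarrow> complex set \<Rightarrow> (complex \<Rightarrow> complex) \<Rightarrow> bool" where
  "hardy p G f \<longleftrightarrow> (if p = \<infinity> then hardy_inf G f else hardy_fin (real_of_ereal p) G f)"

definition Lambda_set :: "ereal \<Rightarrow> complex set \<Rightarrow> complex set" where
  "Lambda_set p G = {l. hardy p G (\<lambda>z. exp (l * z))}"

definition E_span :: "ereal \<Rightarrow> complex set \<Rightarrow> (complex \<Rightarrow> complex) set" where
  "E_span p G = {f. \<exists>S c. finite S \<and> S \<subseteq> Lambda_set p G \<and>
                      f = (\<lambda>z. \<Sum>l\<in>S. c l * exp (l * z))}"

end

theory Submission
  imports Defs "HOL-Complex_Analysis.Conformal_Mappings"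
begin

text \<open>Since |e^(\<lambda>z)|^p = e^(p Re(\<lambda>z)), membership of \<lambda> in \<Lambda>_p(G) is a condition on the real
  function Re(\<lambda>z), which is linear in \<lambda>. Convexity of exp, applied to a convex combination
  of harmonic majorants, gives convexity of \<Lambda>_p; moving the factor p into \<lambda> gives
  \<Lambda>_q = (p/q) \<Lambda>_p; the inequality e^(rx) \<le> 1 - r + r e^x for 0 \<le> r \<le> 1 turns a harmonic
  majorant of e^(q Re(\<lambda>z)) into one of e^(p Re(\<lambda>z)) when p = rq; and boundedness of e^(\<lambda>z)
  means that G lies in a half-plane Re(\<lambda>z) < M.\<close>

lemma harmonic_on_const:
  assumes "open G"
  shows "harmonic_on (\<lambda>z. c) G"
proof -
  have "(\<bullet>) (0::complex) = (\<lambda>w. 0)"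
    by (simp add: fun_eq_iff)
  then show ?thesis
    unfolding harmonic_on_def
    by (intro conjI assms exI[of _ "\<lambda>z. 0"] exI[of _ "\<lambda>z w. 0"]) auto
qed

lemma harmonic_on_open: "harmonic_on u G \<Longrightarrow> open G"
  unfolding harmonic_on_def by blast

lemma harmonic_on_add:
  assumes "harmonic_on u G" "harmonic_on v G"
  shows "harmonic_on (\<lambda>z. u z + v z) G"
proof -
  obtain g Dg where u: "open G" "\<forall>z\<in>G. (u has_derivative (\<lambda>w. g z \<bullet> w)) (at z)"
    "\<forall>z\<in>G. (g has_derivative Dg z) (at z)" "continuous_on G (\<lambda>z. Dg z 1)"
    "continuous_on G (\<lambda>z. Dg z \<i>)" "\<forall>z\<in>G. Re (Dg z 1) + Im (Dg z \<i>) = 0"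
    using assms(1) unfolding harmonic_on_def by blast
  obtain g' Dg' where v: "\<forall>z\<in>G. (v has_derivative (\<lambda>w. g' z \<bullet> w)) (at z)"
    "\<forall>z\<in>G. (g' has_derivative Dg' z) (at z)" "continuous_on G (\<lambda>z. Dg' z 1)"
    "continuous_on G (\<lambda>z. Dg' z \<i>)" "\<forall>z\<in>G. Re (Dg' z 1) + Im (Dg' z \<i>) = 0"
    using assms(2) unfolding harmonic_on_def by blast
  show ?thesis
    unfolding harmonic_on_def
  proof (intro conjI exI[of _ "\<lambda>z. g z + g' z"] exI[of _ "\<lambda>z w. Dg z w + Dg' z w"] ballI)
    fix z assume "z \<in> G"
    then have "((\<lambda>z. u z + v z) has_derivative (\<lambda>w. g z \<bullet> w + g' z \<bullet> w)) (at z)"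
      using u v by (auto intro: derivative_intros)
    then show "((\<lambda>z. u z + v z) has_derivative (\<lambda>w. (g z + g' z) \<bullet> w)) (at z)"
      by (simp add: inner_add_left)
    show "((\<lambda>z. g z + g' z) has_derivative (\<lambda>w. Dg z w + Dg' z w)) (at z)"
      using u v \<open>z \<in> G\<close> by (auto intro: derivative_intros)
    show "Re (Dg z 1 + Dg' z 1) + Im (Dg z \<i> + Dg' z \<i>) = 0"
      using u v \<open>z \<in> G\<close> by (simp add: algebra_simps)
  qed (use u v in \<open>auto intro: continuous_intros\<close>)
qed

lemma harmonic_on_cmult:
  assumes "harmonic_on u G"
  shows "harmonic_on (\<lambda>z. c * u z) G"
proof -
  obtain g Dg where u: "open G" "\<forall>z\<in>G. (u has_derivative (\<lambda>w. g z \<bullet> w)) (at z)"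
    "\<forall>z\<in>G. (g has_derivative Dg z) (at z)" "continuous_on G (\<lambda>z. Dg z 1)"
    "continuous_on G (\<lambda>z. Dg z \<i>)" "\<forall>z\<in>G. Re (Dg z 1) + Im (Dg z \<i>) = 0"
    using assms unfolding harmonic_on_def by blast
  show ?thesis
    unfolding harmonic_on_def
  proof (intro conjI exI[of _ "\<lambda>z. c *\<^sub>R g z"] exI[of _ "\<lambda>z w. c *\<^sub>R Dg z w"] ballI)
    fix z assume "z \<in> G"
    then show "((\<lambda>z. c * u z) has_derivative (\<lambda>w. c *\<^sub>R g z \<bullet> w)) (at z)"
      and "((\<lambda>z. c *\<^sub>R g z) has_derivative (\<lambda>w. c *\<^sub>R Dg z w)) (at z)"
      and "Re (c *\<^sub>R Dg z 1) + Im (c *\<^sub>R Dg z \<i>) = 0"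
      using u by (auto intro: derivative_intros simp flip: distrib_left)
  qed (use u in \<open>auto intro: continuous_intros\<close>)
qed

lemma harmonic_on_subset:
  assumes "harmonic_on u G" "open H" "H \<subseteq> G"
  shows "harmonic_on u H"
proof -
  obtain g Dg where "\<forall>z\<in>G. (u has_derivative (\<lambda>w. g z \<bullet> w)) (at z)"
    "\<forall>z\<in>G. (g has_derivative Dg z) (at z)" "continuous_on G (\<lambda>z. Dg z 1)"
    "continuous_on G (\<lambda>z. Dg z \<i>)" "\<forall>z\<in>G. Re (Dg z 1) + Im (Dg z \<i>) = 0"
    using assms(1) unfolding harmonic_on_def by blast
  with assms(2,3) show ?thesis
    unfolding harmonic_on_def by (blast intro: continuous_on_subset)
qed

lemma hardy_subset:
  assumes "hardy p D f" "open G" "G \<subseteq> D"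
  shows "hardy p G f"
proof (cases "p = \<infinity>")
  case True
  with assms show ?thesis
    unfolding hardy_def hardy_inf_def by (meson bounded_subset holomorphic_on_subset image_mono)
next
  case False
  with assms show ?thesis
    unfolding hardy_def hardy_fin_def if_not_P[OF False]
    by (meson harmonic_on_subset holomorphic_on_subset subsetD)
qed

lemma hardy_inf_exp_iff:
  "hardy_inf G (\<lambda>z. exp (l * z)) \<longleftrightarrow> (\<exists>M. G \<subseteq> {z. Re (l * z) < M})"
proof -
  have "(\<exists>B. \<forall>z\<in>G. exp (Re (l * z)) \<le> B) \<longleftrightarrow> (\<exists>M. \<forall>z\<in>G. Re (l * z) < M)"
  proof
    assume "\<exists>B. \<forall>z\<in>G. exp (Re (l * z)) \<le> B"
    then obtain B where B: "\<forall>z\<in>G. exp (Re (l * z)) \<le> B" by blast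
    have "Re (l * z) < ln B + 1" if "z \<in> G" for z
    proof -
      have "0 < B"
        using B that exp_gt_zero order_less_le_trans by blast
      with B that have "Re (l * z) \<le> ln B"
        by (simp add: ln_ge_iff)
      then show ?thesis by simp
    qed
    then show "\<exists>M. \<forall>z\<in>G. Re (l * z) < M" by blast
  next
    assume "\<exists>M. \<forall>z\<in>G. Re (l * z) < M"
    then obtain M where "\<forall>z\<in>G. Re (l * z) < M" by blast
    then have "\<forall>z\<in>G. exp (Re (l * z)) \<le> exp M" by (simp add: less_imp_le)
    then show "\<exists>B. \<forall>z\<in>G. exp (Re (l * z)) \<le> B" by blast
  qed
  then show ?thesis
    unfolding hardy_inf_def bounded_iff by (auto intro!: holomorphic_intros simp: norm_exp_eq_Re)
qed

lemma Lambda_set_infinity: "Lambda_set \<infinity> G = {l. \<exists>M. G \<subseteq> {z. Re (l * z) < M}}"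
  unfolding Lambda_set_def hardy_def hardy_inf_exp_iff by simp

lemma Lambda_set_ereal:
  "Lambda_set (ereal p) G = {l. \<exists>u. harmonic_on u G \<and> (\<forall>z\<in>G. exp (p * Re (l * z)) \<le> u z)}"
  unfolding Lambda_set_def hardy_def hardy_fin_def
  by (auto intro!: holomorphic_intros simp: powr_def norm_exp_eq_Re)

text \<open>The junk exponent -\<infinity> behaves like 0, as real_of_ereal (-\<infinity>) = 0.\<close>
lemma Lambda_set_MInfty: "Lambda_set (-\<infinity>) G = Lambda_set (ereal 0) G"
  unfolding Lambda_set_def hardy_def by simp

lemma E_span_mono: "Lambda_set p G \<subseteq> Lambda_set q H \<Longrightarrow> E_span p G \<subseteq> E_span q H"
  unfolding E_span_def by blast

lemma Lambda_set_antimono_domain: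
  "open G \<Longrightarrow> G \<subseteq> D \<Longrightarrow> Lambda_set p D \<subseteq> Lambda_set p G"
  unfolding Lambda_set_def using hardy_subset by blast

lemma zero_in_Lambda_set: "open G \<Longrightarrow> 0 \<in> Lambda_set p G"
  unfolding Lambda_set_def hardy_def hardy_fin_def hardy_inf_def
  using harmonic_on_const[of G 1] by (auto intro: holomorphic_intros simp: image_constant_conv)

lemma Re_convex_comb_mult:
  "Re ((u *\<^sub>R x + v *\<^sub>R y) * z) = u * Re (x * z) + v * Re (y * z)"
  by (simp add: scaleR_conv_of_real algebra_simps)

lemma convex_Lambda_set_infinity: "convex (Lambda_set \<infinity> G)"
proof (rule convexI)
  fix x y and u v :: real
  assume "x \<in> Lambda_set \<infinity> G" "y \<in> Lambda_set \<infinity> G" and uv: "0 \<le> u" "0 \<le> v" "u + v = 1"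
  then obtain M N where M: "\<forall>z\<in>G. Re (x * z) < M" and N: "\<forall>z\<in>G. Re (y * z) < N"
    unfolding Lambda_set_infinity by blast
  have "Re ((u *\<^sub>R x + v *\<^sub>R y) * z) < u * M + v * N + 1" if "z \<in> G" for z
  proof -
    have "u * Re (x * z) + v * Re (y * z) \<le> u * M + v * N"
      using uv M N that by (intro add_mono mult_left_mono) (auto intro: less_imp_le)
    then show ?thesis
      unfolding Re_convex_comb_mult by linarith
  qed
  then show "u *\<^sub>R x + v *\<^sub>R y \<in> Lambda_set \<infinity> G"
    unfolding Lambda_set_infinity by blast
qed

lemma convex_Lambda_set_ereal: "convex (Lambda_set (ereal p) G)"
proof (rule convexI)
  fix x y and u v :: real
  assume "x \<in> Lambda_set (ereal p) G" "y \<in> Lambda_set (ereal p) G"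
    and uv: "0 \<le> u" "0 \<le> v" "u + v = 1"
  then obtain f g where f: "harmonic_on f G" "\<forall>z\<in>G. exp (p * Re (x * z)) \<le> f z"
    and g: "harmonic_on g G" "\<forall>z\<in>G. exp (p * Re (y * z)) \<le> g z"
    unfolding Lambda_set_ereal by blast
  have "exp (p * Re ((u *\<^sub>R x + v *\<^sub>R y) * z)) \<le> u * f z + v * g z" if "z \<in> G" for z
  proof -
    have "exp (p * Re ((u *\<^sub>R x + v *\<^sub>R y) * z)) = exp (u * (p * Re (x * z)) + v * (p * Re (y * z)))"
      by (simp add: Re_convex_comb_mult algebra_simps)
    also have "\<dots> \<le> u * exp (p * Re (x * z)) + v * exp (p * Re (y * z))"
      using uv exp_convex by (simp add: convex_on_def)
    also have "\<dots> \<le> u * f z + v * g z"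
      using uv f(2) g(2) that by (intro add_mono mult_left_mono) auto
    finally show ?thesis .
  qed
  moreover have "harmonic_on (\<lambda>z. u * f z + v * g z) G"
    using f(1) g(1) by (intro harmonic_on_add harmonic_on_cmult)
  ultimately show "u *\<^sub>R x + v *\<^sub>R y \<in> Lambda_set (ereal p) G"
    unfolding Lambda_set_ereal by blast
qed

lemma convex_Lambda_set: "convex (Lambda_set p G)"
  by (cases p) (simp_all add: Lambda_set_MInfty convex_Lambda_set_ereal convex_Lambda_set_infinity)

lemma of_real_mult_mem_Lambda_set_ereal:
  "complex_of_real c * l \<in> Lambda_set (ereal p) G \<longleftrightarrow> l \<in> Lambda_set (ereal (c * p)) G"
proof -
  have "p * Re (complex_of_real c * l * z) = (c * p) * Re (l * z)" for z
    by (simp add: mult.assoc)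
  then show ?thesis
    unfolding Lambda_set_ereal mem_Collect_eq by presburger
qed

lemma Lambda_set_ereal_rescale:
  assumes "p \<noteq> 0" "q \<noteq> 0"
  shows "Lambda_set (ereal q) G = (\<lambda>l. complex_of_real (p / q) * l) ` Lambda_set (ereal p) G"
proof (intro equalityI subsetI)
  fix m assume "m \<in> Lambda_set (ereal q) G"
  with assms have "complex_of_real (q / p) * m \<in> Lambda_set (ereal p) G"
    unfolding of_real_mult_mem_Lambda_set_ereal by simp
  moreover have "m = complex_of_real (p / q) * (complex_of_real (q / p) * m)"
    using assms by (simp add: field_simps)
  ultimately show "m \<in> (\<lambda>l. complex_of_real (p / q) * l) ` Lambda_set (ereal p) G"
    by blast
next
  fix m assume "m \<in> (\<lambda>l. complex_of_real (p / q) * l) ` Lambda_set (ereal p) G"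
  then obtain l where l: "l \<in> Lambda_set (ereal p) G" and m: "m = complex_of_real (p / q) * l"
    by blast
  show "m \<in> Lambda_set (ereal q) G"
    unfolding m of_real_mult_mem_Lambda_set_ereal using assms l by simp
qed

lemma exp_mult_le_convex_comb:
  fixes r x :: real
  assumes "0 \<le> r" "r \<le> 1"
  shows "exp (r * x) \<le> 1 - r + r * exp x"
  using convex_onD[OF exp_convex, of r 0 x] assms by simp

lemma Lambda_set_ereal_antimono:
  assumes "0 \<le> p" "p \<le> q"
  shows "Lambda_set (ereal q) G \<subseteq> Lambda_set (ereal p) G"
proof
  fix l assume "l \<in> Lambda_set (ereal q) G"
  then obtain u where u: "harmonic_on u G" "\<forall>z\<in>G. exp (q * Re (l * z)) \<le> u z"
    unfolding Lambda_set_ereal by blast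
  define r where "r = p / q"
  have r: "0 \<le> r" "r \<le> 1" "p = r * q"
    using assms by (auto simp: r_def divide_le_eq_1)
  have "exp (p * Re (l * z)) \<le> (1 - r) + r * u z" if "z \<in> G" for z
  proof -
    have "exp (p * Re (l * z)) \<le> 1 - r + r * exp (q * Re (l * z))"
      using exp_mult_le_convex_comb[OF r(1,2)] by (simp add: r(3) mult.assoc)
    also have "\<dots> \<le> 1 - r + r * u z"
      using r(1) u(2) that by (simp add: mult_left_mono)
    finally show ?thesis .
  qed
  moreover have "harmonic_on (\<lambda>z. (1 - r) + r * u z) G"
    using u(1) harmonic_on_open by (intro harmonic_on_add harmonic_on_const harmonic_on_cmult)
  ultimately show "l \<in> Lambda_set (ereal p) G"
    unfolding Lambda_set_ereal by blast
qed

lemma Lambda_set_infinity_subset_ereal: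
  assumes "open G" "0 \<le> p"
  shows "Lambda_set \<infinity> G \<subseteq> Lambda_set (ereal p) G"
proof
  fix l assume "l \<in> Lambda_set \<infinity> G"
  then obtain M where "\<forall>z\<in>G. Re (l * z) < M"
    unfolding Lambda_set_infinity by blast
  with assms(2) have "\<forall>z\<in>G. exp (p * Re (l * z)) \<le> exp (p * M)"
    by (simp only: exp_le_cancel_iff) (meson less_imp_le mult_left_mono)
  then show "l \<in> Lambda_set (ereal p) G"
    unfolding Lambda_set_ereal using harmonic_on_const[OF assms(1)] by blast
qed

lemma Lambda_set_antimono:
  assumes "open G" "0 \<le> p" "p \<le> q"
  shows "Lambda_set q G \<subseteq> Lambda_set p G"
proof (cases q)
  case (real b)
  with assms(2,3) obtain a where "p = ereal a" "0 \<le> a" "a \<le> b"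
    by (cases p) auto
  then show ?thesis
    using real Lambda_set_ereal_antimono by simp
next
  case PInf
  with assms show ?thesis
    by (cases p) (auto dest: Lambda_set_infinity_subset_ereal)
qed (use assms in simp)

lemma cone_Lambda_set_infinity: "cone (Lambda_set \<infinity> G)"
  unfolding cone_def
proof (intro ballI allI impI)
  fix l and c :: real
  assume "l \<in> Lambda_set \<infinity> G" "0 \<le> c"
  then obtain M where M: "\<forall>z\<in>G. Re (l * z) < M"
    unfolding Lambda_set_infinity by blast
  have "Re (c *\<^sub>R l * z) < c * M + 1" if "z \<in> G" for z
  proof -
    have "c * Re (l * z) \<le> c * M"
      using M \<open>0 \<le> c\<close> that by (meson less_imp_le mult_left_mono)
    then show ?thesis
      by (simp add: scaleR_conv_of_real mult.assoc)
  qed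
  then show "c *\<^sub>R l \<in> Lambda_set \<infinity> G"
    unfolding Lambda_set_infinity by blast
qed

lemma koenigs_domain_open: "koenigs_domain \<Omega> \<Longrightarrow> open \<Omega>"
  unfolding koenigs_domain_def koenigs_function_def
  by (auto intro!: open_mapping_thm3)

theorem proposition3p3:
  fixes \<Omega> :: "complex set"
  assumes "koenigs_domain \<Omega>"
  shows
    "(\<forall>p::ereal. 1 \<le> p \<longrightarrow> convex (Lambda_set p \<Omega>) \<and> 0 \<in> Lambda_set p \<Omega>)
     \<and> (\<forall>p q :: real. 1 \<le> p \<longrightarrow> 1 \<le> q \<longrightarrow>
          Lambda_set (ereal q) \<Omega> = (\<lambda>l. complex_of_real (p / q) * l) ` Lambda_set (ereal p) \<Omega>)
     \<and> (\<forall>p q :: ereal. 1 \<le> p \<longrightarrow> p \<le> q \<longrightarrow>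
          Lambda_set q \<Omega> \<subseteq> Lambda_set p \<Omega> \<and> E_span q \<Omega> \<subseteq> E_span p \<Omega>)
     \<and> Lambda_set \<infinity> \<Omega> \<subseteq> (\<Inter>p\<in>{p::real. 1 \<le> p}. Lambda_set (ereal p) \<Omega>)
     \<and> E_span \<infinity> \<Omega> \<subseteq> (\<Inter>p\<in>{p::real. 1 \<le> p}. E_span (ereal p) \<Omega>)
     \<and> (\<forall>l::complex. l \<noteq> 0 \<longrightarrow>
          (hardy_inf \<Omega> (\<lambda>z. exp (l * z)) \<longleftrightarrow> (\<exists>M::real. \<Omega> \<subseteq> {z. Re (l * z) < M})))
     \<and> (\<forall>l \<in> Lambda_set \<infinity> \<Omega>. \<forall>t::real. t \<ge> 0 \<longrightarrow> complex_of_real t * l \<in> Lambda_set \<infinity> \<Omega>)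
     \<and> (\<forall>D::complex set. koenigs_domain D \<longrightarrow> \<Omega> \<subseteq> D \<longrightarrow>
          (\<forall>p::ereal. 1 \<le> p \<longrightarrow>
             Lambda_set p D \<subseteq> Lambda_set p \<Omega> \<and> E_span p D \<subseteq> E_span p \<Omega>))"
proof -
  have "open \<Omega>"
    using assms by (rule koenigs_domain_open)
  have exponent_antimono: "Lambda_set q \<Omega> \<subseteq> Lambda_set p \<Omega> \<and> E_span q \<Omega> \<subseteq> E_span p \<Omega>"
    if "1 \<le> p" "p \<le> q" for p q :: ereal
  proof -
    have "0 \<le> p"
      using that(1) by (cases p) auto
    then show ?thesis
      using Lambda_set_antimono[OF \<open>open \<Omega>\<close> _ that(2)] E_span_mono by blast
  qed
  have infinity_subset: "Lambda_set \<infinity> \<Omega> \<subseteq> Lambda_set (ereal p) \<Omega>" "E_span \<infinity> \<Omega> \<subseteq> E_span (ereal p) \<Omega>"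
    if "1 \<le> p" for p :: real
    using exponent_antimono[of "ereal p" \<infinity>] that by auto
  have domain_antimono: "Lambda_set p D \<subseteq> Lambda_set p \<Omega> \<and> E_span p D \<subseteq> E_span p \<Omega>"
    if "\<Omega> \<subseteq> D" for p D
    using Lambda_set_antimono_domain[OF \<open>open \<Omega>\<close> that] E_span_mono by blast
  have cone: "complex_of_real t * l \<in> Lambda_set \<infinity> \<Omega>" if "l \<in> Lambda_set \<infinity> \<Omega>" "0 \<le> t" for l t
    using cone_Lambda_set_infinity that unfolding cone_def by (simp add: scaleR_conv_of_real)
  show ?thesis
    using convex_Lambda_set zero_in_Lambda_set[OF \<open>open \<Omega>\<close>] Lambda_set_ereal_rescale
      exponent_antimono hardy_inf_exp_iff cone domain_antimono
    by (auto intro: infinity_subset[THEN subsetD])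
qed

end
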